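(* Let $k\ge 1$ and $m\ge 0$ be integers such that $2^{m+\nu_2(k)}>k$. Then the smallest integer $n\ge k$ such that $2^m$ divides $\binom{n}{k}$ is $n=2^{m+\nu_2(k)}$.
   Context: $\nu_2(x)$ denotes the 2-adic valuation of a positive integer $x$, i.e. the exponent of the largest power of $2$ dividing $x$. *)

theory Defs
  imports "HOL-Computational_Algebra.Computational_Algebra"
begin

definition nu2 :: "nat \<Rightarrow> nat" where
  "nu2 x = multiplicity (2::nat) x"

end

theory Submission
  imports Defs
begin

text \<open>
  Write \<open>M = m + \<nu>\<^sub>2(k)\<close>. By Legendre's formula, \<open>\<nu>\<^sub>2 (n choose k)\<close> is the number of
  indices \<open>i\<close> at which \<open>\<lfloor>n/2\<^sup>i\<rfloor> - \<lfloor>k/2\<^sup>i\<rfloor> - \<lfloor>(n-k)/2\<^sup>i\<rfloor>\<close> equals 1 (it is always 0 or 1).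
  For \<open>k \<le> n < 2\<^sup>M\<close> this never happens for \<open>i \<le> \<nu>\<^sub>2(k)\<close>, since then \<open>2\<^sup>i\<close> divides \<open>k\<close>,
  nor for \<open>i \<ge> M\<close>, so \<open>\<nu>\<^sub>2 (n choose k) < m\<close>. Conversely \<open>2\<^sup>M\<close> divides
  \<open>k * (2\<^sup>M choose k) = 2\<^sup>M * (2\<^sup>M - 1 choose k - 1)\<close>, so \<open>2\<^sup>m\<close> divides \<open>2\<^sup>M choose k\<close>.
\<close>

lemma div_add_le_Suc:
  fixes a b d :: nat
  shows "(a + b) div d \<le> a div d + b div d + 1"
proof (cases "d = 0")
  case False
  then have "a mod d + b mod d < d * 2"
    using mod_less_divisor[of d a] mod_less_divisor[of d b] by linarith
  then have "(a mod d + b mod d) div d < 2"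
    using False by (simp add: div_less_iff_less_mult mult.commute)
  then show ?thesis using div_add1_eq[of a b d] by simp
qed simp

lemma prime_not_unit_nat: "prime (p::nat) \<Longrightarrow> \<not> is_unit p"
  by (metis not_prime_unit)

lemma multiplicity_less_exp:
  fixes p x :: nat
  assumes "prime p" "x \<noteq> 0" "x < p ^ M"
  shows "multiplicity p x < M"
proof -
  have "\<not> p ^ M dvd x" using assms(2,3) by (auto dest: dvd_imp_le)
  then show ?thesis using multiplicity_lessI[OF assms(2) prime_not_unit_nat[OF assms(1)]] by blast
qed

lemma card_prime_power_divisors:
  fixes p x :: nat
  assumes "prime p" "x \<noteq> 0" "x < p ^ M"
  shows "card {i \<in> {1..M}. p ^ i dvd x} = multiplicity p x"
proof -
  note dvd_iff = power_dvd_iff_le_multiplicity[OF assms(2) prime_not_unit_nat[OF assms(1)]]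
  have "multiplicity p x < M" using multiplicity_less_exp[OF assms] .
  then have "{i \<in> {1..M}. p ^ i dvd x} = {1..multiplicity p x}"
    unfolding dvd_iff by auto
  then show ?thesis by simp
qed

lemma multiplicity_fact_legendre:
  fixes p :: nat
  assumes "prime p" "n < p ^ M"
  shows "multiplicity p (fact n :: nat) = (\<Sum>i\<in>{1..M}. n div p ^ i)"
  using assms(2)
proof (induction n)
  case (Suc n)
  have "multiplicity p (fact (Suc n) :: nat) = multiplicity p (Suc n * fact n)"
    by (simp only: fact_Suc of_nat_id)
  also have "\<dots> = multiplicity p (Suc n) + multiplicity p (fact n :: nat)"
    by (rule prime_elem_multiplicity_mult_distrib) (use assms(1) in auto)
  also have "multiplicity p (Suc n) = (\<Sum>i\<in>{1..M}. if p ^ i dvd Suc n then 1 else 0)"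
    using card_prime_power_divisors[OF assms(1) _ Suc.prems] by (simp add: sum.If_cases Int_def)
  also have "multiplicity p (fact n :: nat) = (\<Sum>i\<in>{1..M}. n div p ^ i)"
    using Suc by simp
  also have "(\<Sum>i\<in>{1..M}. if p ^ i dvd Suc n then 1 else 0) + \<dots> = (\<Sum>i\<in>{1..M}. Suc n div p ^ i)"
    by (subst sum.distrib[symmetric], rule sum.cong) (auto simp: div_Suc dvd_eq_mod_eq_0)
  finally show ?case .
qed simp

lemma multiplicity_choose_legendre:
  fixes p :: nat
  assumes "prime p" "k \<le> n" "n < p ^ M"
  shows "multiplicity p (n choose k) + (\<Sum>i\<in>{1..M}. k div p ^ i) + (\<Sum>i\<in>{1..M}. (n - k) div p ^ i)
           = (\<Sum>i\<in>{1..M}. n div p ^ i)"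
proof -
  note mult_distrib = prime_elem_multiplicity_mult_distrib[OF prime_imp_prime_elem[OF assms(1)]]
  have "fact n = (n choose k) * (fact k * fact (n - k) :: nat)"
    using binomial_fact_lemma[OF assms(2)] by (simp add: mult_ac)
  then have "multiplicity p (fact n :: nat)
      = multiplicity p (n choose k) + (multiplicity p (fact k :: nat) + multiplicity p (fact (n - k) :: nat))"
    using assms(2) by (simp add: mult_distrib)
  moreover have "k < p ^ M" "n - k < p ^ M" using assms(2,3) by auto
  ultimately show ?thesis
    using multiplicity_fact_legendre[OF assms(1)] assms(3) by (simp only: add.assoc)
qed

lemma multiplicity_choose_less:
  fixes p :: nat
  assumes "prime p" "0 < k" "k \<le> n" "n < p ^ M"
  shows "multiplicity p (n choose k) < M - multiplicity p k"
proof -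
  define v where "v = multiplicity p k"
  define carry where "carry i = (if v < i \<and> i < M then 1 else 0 :: nat)" for i
  have "v < M" unfolding v_def using assms by (intro multiplicity_less_exp) auto
  have n_split: "n = k + (n - k)" using assms(3) by simp
  have carry_bound: "n div p ^ i \<le> k div p ^ i + (n - k) div p ^ i + carry i"
    if i: "i \<in> {1..M}" for i
  proof -
    consider "i \<le> v" | "i = M" | "v < i" "i < M" using i by fastforce
    then show ?thesis
    proof cases
      case 1
      then have "p ^ i dvd k" unfolding v_def by (rule multiplicity_dvd')
      then have "n div p ^ i = k div p ^ i + (n - k) div p ^ i"
        by (subst n_split) (rule div_plus_div_distrib_dvd_left)
      then show ?thesis by simp
    next
      case 2
      then show ?thesis using assms(4) by simp
    next
      case 3
      then show ?thesis
        using div_add_le_Suc[of k "n - k" "p ^ i"] n_split unfolding carry_def by simp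
    qed
  qed
  have "(\<Sum>i\<in>{1..M}. n div p ^ i) \<le> (\<Sum>i\<in>{1..M}. k div p ^ i + (n - k) div p ^ i + carry i)"
    using carry_bound by (rule sum_mono)
  also have "\<dots> = (\<Sum>i\<in>{1..M}. k div p ^ i) + (\<Sum>i\<in>{1..M}. (n - k) div p ^ i) + sum carry {1..M}"
    by (simp only: sum.distrib)
  also have "sum carry {1..M} = card {v<..<M}"
  proof -
    have "{1..M} \<inter> {i. v < i \<and> i < M} = {v<..<M}" by auto
    then show ?thesis unfolding carry_def by (simp add: sum.If_cases)
  qed
  finally show ?thesis
    using multiplicity_choose_legendre[OF assms(1,3,4)] \<open>v < M\<close> unfolding v_def by simp
qed

lemma multiplicity_prime_power_choose_ge:
  fixes p :: nat
  assumes "prime p" "0 < k" "k \<le> p ^ M"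
  shows "M \<le> multiplicity p k + multiplicity p (p ^ M choose k)"
proof -
  have nonzero: "k * (p ^ M choose k) \<noteq> 0" using assms(2,3) by simp
  have "p ^ M dvd k * (p ^ M choose k)"
    using times_binomial_minus1_eq[OF assms(2)] by simp
  then have "M \<le> multiplicity p (k * (p ^ M choose k))"
    using power_dvd_iff_le_multiplicity[OF nonzero prime_not_unit_nat[OF assms(1)]] by blast
  also have "\<dots> = multiplicity p k + multiplicity p (p ^ M choose k)"
    by (rule prime_elem_multiplicity_mult_distrib) (use nonzero assms(1) in auto)
  finally show ?thesis .
qed

theorem mainTheorem1:
  fixes k m :: nat
  assumes "k \<ge> 1" and "2 ^ (m + nu2 k) > k"
  shows "(LEAST n::nat. n \<ge> k \<and> 2 ^ m dvd (n choose k)) = 2 ^ (m + nu2 k)"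
proof -
  define M where "M = m + multiplicity 2 k"
  have k_pos: "0 < k" and k_less: "k < 2 ^ M"
    using assms unfolding M_def nu2_def by auto
  have dvd_choose_iff: "2 ^ m dvd (n choose k) \<longleftrightarrow> m \<le> multiplicity 2 (n choose k)"
    if "k \<le> n" for n
    by (rule power_dvd_iff_le_multiplicity) (use that in auto)
  have "(LEAST n. k \<le> n \<and> 2 ^ m dvd (n choose k)) = 2 ^ M"
  proof (rule Least_equality)
    have "M \<le> multiplicity 2 k + multiplicity 2 (2 ^ M choose k)"
      using multiplicity_prime_power_choose_ge[of 2 k M] k_pos k_less by simp
    then show "k \<le> 2 ^ M \<and> 2 ^ m dvd (2 ^ M choose k)"
      using k_less dvd_choose_iff[of "2 ^ M"] unfolding M_def by simp
  next
    fix n assume n: "k \<le> n \<and> 2 ^ m dvd (n choose k)"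
    show "2 ^ M \<le> n"
    proof (rule ccontr)
      assume "\<not> 2 ^ M \<le> n"
      then have "multiplicity 2 (n choose k) < m"
        using multiplicity_choose_less[of 2 k n M] k_pos n unfolding M_def by simp
      then show False using n dvd_choose_iff[of n] by linarith
    qed
  qed
  then show ?thesis unfolding M_def nu2_def .
qed

end
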